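(* (Perfect soundness.) Consider the card-based Makaro protocol described in the context. If the prover $P$ does not know a solution of the Makaro puzzle (so that the numbers encoded by the cell cards $P$ places violate at least one of the room, neighbor or arrow conditions), then the verifier $V$ always rejects.
   Context: Makaro puzzle: a rectangular grid of white and black cells. The white cells are partitioned into polyominoes called rooms; the size of a room is its number of cells. Some white cells already contain a number. Each black cell contains an arrow pointing to one of its (horizontally or vertically) adjacent white cells. A solution assigns a number to every empty white cell such that: (room condition) each room of size $p$ contains exactly the numbers $1,2,\dots,p$; (neighbor condition) two orthogonally adjacent white cells in different rooms contain different numbers; (arrow condition) for each black cell, the white cell its arrow points to contains the unique largest number among the (up to four) numbers in the white cells orthogonally adjacent to that black cell. Let $k$ be the size of the largest room. Cards: all cards have distinct front faces and identical backs. For each room $R$ of size $p$ there are cell cards $R_1,\dots,R_p$ (cards of different rooms are all distinct); there are helping cards $h_1,\dots,h_k$ and encoding cards $a_i,b_i,c_i,d_i$ for $i=1,\dots,2k-1$. A pile-scramble shuffle applied to a matrix of face-down cards permutes its columns by a uniformly random permutation unknown to all parties; a pile-shifting shuffle permutes the columns by a uniformly random cyclic shift unknown to all parties. Protocol. Setup: on each white cell of room $R$ containing (or, for empty cells, secretly assigned by $P$) the number $v$, $P$ places the face-down card $R_v$ (publicly for prefilled cells, secretly for the others). Room check, for each room $R$ of size $p$: put its cell cards in a fixed order in Row 1 of a $2\times p$ matrix and $h_1,\dots,h_p$ in Row 2; pile-scramble; reveal Row 1 and reject unless it is a permutation of $R_1,\dots,R_p$; turn these cards face down, pile-scramble again,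 reveal Row 2, rearrange the columns so Row 2 reads $h_1,\dots,h_p$, and return the Row 1 cards to their cells. Conversion (cell with card $R_x$ in room $R$ of size $p$, target length $m\ge p$, card set $X\in\{a,b,c,d\}$): put the cell cards of $R$ in a fixed order in Row 1 of a matrix, with $R_x$ in column $i$; $h_1,\dots,h_p$ in Row 2; $X_1$ in Row 3, column $i$; $P$ secretly forms a uniformly random permutation $S$ of $X_2,\dots,X_m$ and fills the remaining $p-1$ cells of Row 3 from left to right with the first $p-1$ cards of $S$. Pile-scramble the $3\times p$ matrix; reveal Row 1 and rearrange columns so Row 1 reads $R_1,\dots,R_p$; remove Row 3 as a sequence $T$ and append the remaining $m-p$ cards of $S$ to obtain a face-down sequence of length $m$ (the encoding sequence). Then turn Row 1 face down, pile-scramble, reveal Row 2, rearrange so it reads $h_1,\dots,h_p$, and return the cell cards to their cells. Neighbor check, for each pair of adjacent white cells in different rooms (room sizes $p,q$, $m=\max(p,q)$): convert the first cell with set $a$ and the second with set $b$, both with length $m$; place the two sequences as Rows 1 and 2 of a $2\times m$ matrix; pile-scramble; reveal Row 1; let $a_1$ be in column $i$; reveal the Row 2 card in column $i$ and reject if it is $b_1$. Arrow check, for each black cell: let the pointed-to cell and the other (up to three) adjacent white cells be considered, and let $m$ be the maximum room size among them; convert the pointed-to cell with set $a$ and the others with sets $b,c,d$, all with length $2m-1$; place them as rows of a matrix (Row 1 from set $a$); apply a pile-shifting shuffle; reveal Row 1, let $a_1$ be in column $i$; reveal the cards of the other rows in columns $i,i+1,\dots,i+m-1$ (indices modulo $2m-1$)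 and reject if any of them is $b_1$, $c_1$ or $d_1$. $V$ accepts if no check rejects. *)

theory Defs
  imports Main "HOL-Library.Multiset"
begin

type_synonym cell = "nat \<times> nat"

text \<open>Cells are pairs (row, column).
  The rooms are given as lists of cells; the order of a room list is the
  "fixed order" of its cells used by the protocol.  pre c = Some v means
  cell c is prefilled with v; arr b is the white cell the arrow of the
  black cell b points to.\<close>

record puzzle =
  ph :: nat
  pw :: nat
  white :: "cell set"
  rooms :: "cell list list"
  pre :: "cell \<Rightarrow> nat option"
  arr :: "cell \<Rightarrow> cell"

definition grid :: "puzzle \<Rightarrow> cell set" where
  "grid P = {(i, j). i < ph P \<and> j < pw P}"

definition black :: "puzzle \<Rightarrow> cell set" where
  "black P = grid P - white P"

definition adj :: "cell \<Rightarrow> cell \<Rightarrow> bool" where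
  "adj c d \<longleftrightarrow> (fst c = fst d \<and> (snd d = snd c + 1 \<or> snd c = snd d + 1))
             \<or> (snd c = snd d \<and> (fst d = fst c + 1 \<or> fst c = fst d + 1))"

definition room_connected :: "cell list \<Rightarrow> bool" where
  "room_connected cs \<longleftrightarrow>
     (\<forall>c\<in>set cs. \<forall>d\<in>set cs. (\<lambda>x y. x \<in> set cs \<and> y \<in> set cs \<and> adj x y)\<^sup>*\<^sup>* c d)"

definition roomidx :: "puzzle \<Rightarrow> cell \<Rightarrow> nat" where
  "roomidx P c = (THE r. r < length (rooms P) \<and> c \<in> set (rooms P ! r))"

definition rsize :: "puzzle \<Rightarrow> cell \<Rightarrow> nat" where
  "rsize P c = length (rooms P ! roomidx P c)"

definition pos :: "puzzle \<Rightarrow> cell \<Rightarrow> nat" where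
  "pos P c = (THE i. i < rsize P c \<and> rooms P ! roomidx P c ! i = c)"

definition wf_puzzle :: "puzzle \<Rightarrow> bool" where
  "wf_puzzle P \<longleftrightarrow>
     white P \<subseteq> grid P
   \<and> (\<forall>r < length (rooms P). rooms P ! r \<noteq> [] \<and> distinct (rooms P ! r)
                             \<and> room_connected (rooms P ! r))
   \<and> (\<forall>r < length (rooms P). \<forall>s < length (rooms P). r \<noteq> s \<longrightarrow>
          set (rooms P ! r) \<inter> set (rooms P ! s) = {})
   \<and> (\<Union>r < length (rooms P). set (rooms P ! r)) = white P
   \<and> (\<forall>c v. pre P c = Some v \<longrightarrow> c \<in> white P \<and> 1 \<le> v \<and> v \<le> rsize P c)
   \<and> (\<forall>b \<in> black P. arr P b \<in> white P \<and> adj b (arr P b))"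

definition is_solution :: "puzzle \<Rightarrow> (cell \<Rightarrow> nat) \<Rightarrow> bool" where
  "is_solution P x \<longleftrightarrow>
     (\<forall>c v. pre P c = Some v \<longrightarrow> x c = v)
   \<and> (\<forall>r < length (rooms P). x ` set (rooms P ! r) = {1..length (rooms P ! r)})
   \<and> (\<forall>c\<in>white P. \<forall>d\<in>white P. adj c d \<and> roomidx P c \<noteq> roomidx P d \<longrightarrow> x c \<noteq> x d)
   \<and> (\<forall>b\<in>black P. \<forall>c\<in>white P. adj b c \<and> c \<noteq> arr P b \<longrightarrow> x c < x (arr P b))"

text \<open>Cell r v is the cell card R_v of room number r; Hc i is h_i;
  Ac i, Bc i, Cc i, Dc i are a_i, b_i, c_i, d_i.\<close>
datatype card = Cell nat nat | Hc nat | Ac nat | Bc nat | Cc nat | Dc nat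

text \<open>A matrix of cards is a list of columns (each column a list of cards,
  from Row 1 downwards).  A pile-scramble shuffle with outcome pi (a
  permutation of the column indices) and a pile-shifting shuffle with
  outcome r (a cyclic shift):\<close>
definition is_perm :: "nat list \<Rightarrow> nat \<Rightarrow> bool" where
  "is_perm \<pi> n \<longleftrightarrow> distinct \<pi> \<and> set \<pi> = {..<n}"

definition permute_cols :: "nat list \<Rightarrow> card list list \<Rightarrow> card list list" where
  "permute_cols \<pi> M = map (\<lambda>i. M ! i) \<pi>"

definition shift_cols :: "nat \<Rightarrow> card list list \<Rightarrow> card list list" where
  "shift_cols r M = rotate r M"

text \<open>The placement pl gives the (face-down) card lying on each white cell.\<close>
definition placement_ok :: "puzzle \<Rightarrow> (cell \<Rightarrow> card) \<Rightarrow> bool" where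
  "placement_ok P pl \<longleftrightarrow> (\<forall>c v. pre P c = Some v \<longrightarrow> pl c = Cell (roomidx P c) v)"

text \<open>Room check for room number r, first pile-scramble outcome pi:
  rejects unless the revealed Row 1 is a permutation of R_1..R_p.
  (The remaining steps only return the cell cards to their cells.)\<close>
definition room_reject :: "puzzle \<Rightarrow> (cell \<Rightarrow> card) \<Rightarrow> nat \<Rightarrow> nat list \<Rightarrow> bool" where
  "room_reject P pl r \<pi> =
    (let cs = rooms P ! r; p = length cs;
         cols = map (\<lambda>j. [pl (cs ! j), Hc (j + 1)]) [0..<p];
         sc = permute_cols \<pi> cols;
         row1 = map (\<lambda>col. col ! 0) sc
     in mset row1 \<noteq> mset (map (Cell r) [1..<p + 1]))"

text \<open>Valid secret sequence S of the prover: a permutation of X_2..X_m.\<close>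
definition valid_S :: "(nat \<Rightarrow> card) \<Rightarrow> nat \<Rightarrow> card list \<Rightarrow> bool" where
  "valid_S X m S \<longleftrightarrow> mset S = mset (map X [2..<m + 1])"

text \<open>Conversion of the card on cell c to an encoding sequence of length m
  with card set X, secret sequence S and pile-scramble outcome pi.\<close>
definition conv :: "puzzle \<Rightarrow> (cell \<Rightarrow> card) \<Rightarrow> cell \<Rightarrow> (nat \<Rightarrow> card) \<Rightarrow> nat
                     \<Rightarrow> card list \<Rightarrow> nat list \<Rightarrow> card list" where
  "conv P pl c X m S \<pi> =
    (let r = roomidx P c; cs = rooms P ! r; p = length cs; i = pos P c;
         row3 = map (\<lambda>j. if j = i then X 1 else S ! (if j < i then j else j - 1)) [0..<p];
         cols = map (\<lambda>j. [pl (cs ! j), Hc (j + 1), row3 ! j]) [0..<p];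
         sc = permute_cols \<pi> cols;
         rearr = map (\<lambda>v. sc ! (LEAST j. j < length sc \<and> sc ! j ! 0 = Cell r v)) [1..<p + 1];
         T = map (\<lambda>col. col ! 2) rearr
     in T @ drop (p - 1) S)"

definition npairs :: "puzzle \<Rightarrow> (cell \<times> cell) set" where
  "npairs P = {(c, d). c \<in> white P \<and> d \<in> white P
       \<and> ((fst d = fst c \<and> snd d = snd c + 1) \<or> (fst d = fst c + 1 \<and> snd d = snd c))
       \<and> roomidx P c \<noteq> roomidx P d}"

text \<open>Neighbor check: S1,S2 and pi1,pi2 are the secret sequences and
  scramble outcomes of the two conversions, rho the outcome of the final
  pile-scramble shuffle.\<close>
definition neighbor_reject :: "puzzle \<Rightarrow> (cell \<Rightarrow> card) \<Rightarrow> cell \<Rightarrow> cell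
     \<Rightarrow> card list \<Rightarrow> nat list \<Rightarrow> card list \<Rightarrow> nat list \<Rightarrow> nat list \<Rightarrow> bool" where
  "neighbor_reject P pl c d S1 \<pi>1 S2 \<pi>2 \<rho> =
    (let m = max (rsize P c) (rsize P d);
         E1 = conv P pl c Ac m S1 \<pi>1;
         E2 = conv P pl d Bc m S2 \<pi>2;
         cols = map (\<lambda>j. [E1 ! j, E2 ! j]) [0..<m];
         sc = permute_cols \<rho> cols;
         i = (LEAST i. i < m \<and> sc ! i ! 0 = Ac 1)
     in sc ! i ! 1 = Bc 1)"

definition nbrs :: "cell \<Rightarrow> cell list" where
  "nbrs c = (let (i, j) = c in
     (if 0 < i then [(i - 1, j)] else []) @ [(i + 1, j)] @
     (if 0 < j then [(i, j - 1)] else []) @ [(i, j + 1)])"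

definition others :: "puzzle \<Rightarrow> cell \<Rightarrow> cell list" where
  "others P b = filter (\<lambda>c. c \<in> white P \<and> c \<noteq> arr P b) (nbrs b)"

definition xset :: "nat \<Rightarrow> nat \<Rightarrow> card" where
  "xset k = [Ac, Bc, Cc, Dc] ! k"

text \<open>Cells involved in the arrow check of b: row 0 is the pointed-to cell
  (converted with set a), rows 1,2,3 are the other adjacent white cells
  (converted with sets b, c, d).\<close>
definition acells :: "puzzle \<Rightarrow> cell \<Rightarrow> cell list" where
  "acells P b = arr P b # others P b"

definition am :: "puzzle \<Rightarrow> cell \<Rightarrow> nat" where
  "am P b = Max (set (map (rsize P) (acells P b)))"

text \<open>Arrow check: S k, \<pi> k are the secret sequence / scramble outcome of the
  conversion of row k, and s the outcome of the pile-shifting shuffle.\<close>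
definition arrow_reject :: "puzzle \<Rightarrow> (cell \<Rightarrow> card) \<Rightarrow> cell
     \<Rightarrow> (nat \<Rightarrow> card list) \<Rightarrow> (nat \<Rightarrow> nat list) \<Rightarrow> nat \<Rightarrow> bool" where
  "arrow_reject P pl b S \<pi> s =
    (let cs = acells P b; m = am P b; len = 2 * m - 1;
         E = map (\<lambda>k. conv P pl (cs ! k) (xset k) len (S k) (\<pi> k)) [0..<length cs];
         cols = map (\<lambda>j. map (\<lambda>e. e ! j) E) [0..<len];
         sc = shift_cols s cols;
         i = (LEAST i. i < len \<and> sc ! i ! 0 = Ac 1)
     in \<exists>l < m. \<exists>card \<in> set (tl (sc ! ((i + l) mod len))).
            card \<in> {Bc 1, Cc 1, Dc 1})"

text \<open>All random outcomes of the shuffles together with the prover's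
  secret sequences (the latter may be chosen adversarially).\<close>
record tape =
  t_room :: "nat \<Rightarrow> nat list"
  t_nS :: "cell \<times> cell \<Rightarrow> nat \<Rightarrow> card list"
  t_npi :: "cell \<times> cell \<Rightarrow> nat \<Rightarrow> nat list"
  t_nrho :: "cell \<times> cell \<Rightarrow> nat list"
  t_aS :: "cell \<Rightarrow> nat \<Rightarrow> card list"
  t_api :: "cell \<Rightarrow> nat \<Rightarrow> nat list"
  t_ashift :: "cell \<Rightarrow> nat"

definition valid_tape :: "puzzle \<Rightarrow> tape \<Rightarrow> bool" where
  "valid_tape P t \<longleftrightarrow>
     (\<forall>r < length (rooms P). is_perm (t_room t r) (length (rooms P ! r)))
   \<and> (\<forall>(c, d) \<in> npairs P. let m = max (rsize P c) (rsize P d) in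
          valid_S Ac m (t_nS t (c, d) 0) \<and> valid_S Bc m (t_nS t (c, d) 1)
        \<and> is_perm (t_npi t (c, d) 0) (rsize P c) \<and> is_perm (t_npi t (c, d) 1) (rsize P d)
        \<and> is_perm (t_nrho t (c, d)) m)
   \<and> (\<forall>b \<in> black P. \<forall>k < length (acells P b).
          valid_S (xset k) (2 * am P b - 1) (t_aS t b k)
        \<and> is_perm (t_api t b k) (rsize P (acells P b ! k)))"

definition accepts :: "puzzle \<Rightarrow> (cell \<Rightarrow> card) \<Rightarrow> tape \<Rightarrow> bool" where
  "accepts P pl t \<longleftrightarrow>
     (\<forall>r < length (rooms P). \<not> room_reject P pl r (t_room t r))
   \<and> (\<forall>(c, d) \<in> npairs P. \<not> neighbor_reject P pl c d
          (t_nS t (c, d) 0) (t_npi t (c, d) 0) (t_nS t (c, d) 1) (t_npi t (c, d) 1)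
          (t_nrho t (c, d)))
   \<and> (\<forall>b \<in> black P. \<not> arrow_reject P pl b (t_aS t b) (t_api t b) (t_ashift t b))"

end

theory Submission
  imports Defs
begin

(* If every room check passes, the cell cards of a room of size p are R_1, ..., R_p in some order,
   so the placement assigns each white cell a number; these numbers satisfy the room condition and
   agree with the prefilled cells.  Whatever the shuffle outcomes and whatever sequence S the
   prover supplies, converting R_v gives a sequence whose only card X_1 is at position v.  So if
   adjacent cells of different rooms carry the same number, b_1 lies under a_1 in the neighbor
   check; and if a cell next to a black cell carries a number v at least the number v0 of the
   pointed-to cell, its card b_1, c_1 or d_1 lies v - v0 < m columns after a_1 in the arrow check,
   a distance that the cyclic shift preserves. *)

lemma roomidx_eq:
  assumes wf: "wf_puzzle P" and r: "r < length (rooms P)" "c \<in> set (rooms P ! r)"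
  shows "roomidx P c = r"
proof -
  have "s = r" if "s < length (rooms P)" "c \<in> set (rooms P ! s)" for s
    using wf r that unfolding wf_puzzle_def by blast
  then show ?thesis
    unfolding roomidx_def using r by (intro the_equality) blast+
qed

lemma roomidx_in_rooms:
  assumes wf: "wf_puzzle P" and c: "c \<in> white P"
  shows "roomidx P c < length (rooms P)" "c \<in> set (rooms P ! roomidx P c)"
proof -
  obtain r where "r < length (rooms P)" "c \<in> set (rooms P ! r)"
    using wf c unfolding wf_puzzle_def by blast
  then show "roomidx P c < length (rooms P)" "c \<in> set (rooms P ! roomidx P c)"
    using roomidx_eq[OF wf] by simp_all
qed

lemma pos_in_room:
  assumes wf: "wf_puzzle P" and c: "c \<in> white P"
  shows "pos P c < rsize P c" "rooms P ! roomidx P c ! pos P c = c"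
proof -
  let ?cs = "rooms P ! roomidx P c"
  have dist: "distinct ?cs"
    using wf roomidx_in_rooms(1)[OF wf c] unfolding wf_puzzle_def by blast
  obtain i where i: "i < length ?cs" "?cs ! i = c"
    using roomidx_in_rooms(2)[OF wf c] by (auto simp: in_set_conv_nth)
  have "pos P c = i"
    unfolding pos_def rsize_def
  proof (rule the_equality)
    fix j assume "j < length ?cs \<and> ?cs ! j = c"
    then show "j = i" using dist i by (metis nth_eq_iff_index_eq)
  qed (use i in simp)
  with i show "pos P c < rsize P c" "?cs ! pos P c = c"
    unfolding rsize_def by simp_all
qed

lemma is_perm_length: "is_perm \<pi> n \<Longrightarrow> length \<pi> = n"
  unfolding is_perm_def by (metis card_lessThan distinct_card)

lemma is_perm_nth_less: "is_perm \<pi> n \<Longrightarrow> j < n \<Longrightarrow> \<pi> ! j < n"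
  using is_perm_length unfolding is_perm_def by (metis lessThan_iff nth_mem)

lemma is_perm_mset: "is_perm \<pi> n \<Longrightarrow> mset \<pi> = mset [0..<n]"
  unfolding is_perm_def by (metis set_eq_iff_mset_eq_distinct distinct_upt set_upt lessThan_atLeast0)

lemma is_perm_rotate: "is_perm (rotate s [0..<n]) n"
  unfolding is_perm_def by auto

lemma nth_permute_cols: "j < length \<pi> \<Longrightarrow> permute_cols \<pi> M ! j = M ! (\<pi> ! j)"
  unfolding permute_cols_def by simp

lemma shift_cols_eq_permute_cols: "shift_cols s M = permute_cols (rotate s [0..<length M]) M"
  unfolding shift_cols_def permute_cols_def by (metis map_nth rotate_map)

lemma Least_permute_cols_key:
  assumes \<pi>: "is_perm \<pi> n" and k: "k < n"
    and key: "\<And>j. j < n \<Longrightarrow> M ! j ! 0 = K \<longleftrightarrow> j = k"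
  shows "(LEAST i. i < n \<and> permute_cols \<pi> M ! i ! 0 = K) < n
       \<and> \<pi> ! (LEAST i. i < n \<and> permute_cols \<pi> M ! i ! 0 = K) = k"
proof -
  have len: "length \<pi> = n" using \<pi> by (rule is_perm_length)
  obtain i where i: "i < n" "\<pi> ! i = k"
    using \<pi> k len unfolding is_perm_def by (metis in_set_conv_nth lessThan_iff)
  have "(LEAST i. i < n \<and> permute_cols \<pi> M ! i ! 0 = K) = i"
  proof (rule Least_equality)
    show "i < n \<and> permute_cols \<pi> M ! i ! 0 = K"
      using i k key len by (simp add: nth_permute_cols)
  next
    fix j assume j: "j < n \<and> permute_cols \<pi> M ! j ! 0 = K"
    then have "M ! (\<pi> ! j) ! 0 = K" using len nth_permute_cols[of j \<pi> M] by simp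
    then have "\<pi> ! j = \<pi> ! i" using key is_perm_nth_less[OF \<pi>] j i by simp
    then show "i \<le> j"
      using \<pi> i j len unfolding is_perm_def by (metis nth_eq_iff_index_eq order_refl)
  qed
  then show ?thesis using i by simp
qed

lemma valid_S_length: "valid_S X m S \<Longrightarrow> length S = m - 1"
  unfolding valid_S_def by (drule mset_eq_length) (simp; arith)

lemma valid_S_first_notin:
  assumes "valid_S X m S" "inj X"
  shows "X 1 \<notin> set S"
proof -
  have "set S = X ` {2..<m + 1}"
    using assms(1) unfolding valid_S_def by (metis mset_eq_setD set_map set_upt)
  then show ?thesis using assms(2) by (simp add: inj_image_mem_iff)
qed

lemma xset_inj:
  assumes "k < 4"
  shows "inj (xset k)"
proof -
  have "k = 0 \<or> k = 1 \<or> k = 2 \<or> k = 3" using assms by auto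
  then show ?thesis by (auto simp: xset_def inj_def)
qed

definition encodes :: "(nat \<Rightarrow> card) \<Rightarrow> nat \<Rightarrow> card list \<Rightarrow> bool" where
  "encodes X v E \<longleftrightarrow> v \<in> {1..length E} \<and> (\<forall>j < length E. E ! j = X 1 \<longleftrightarrow> j = v - 1)"

definition room_cards_perm :: "puzzle \<Rightarrow> (cell \<Rightarrow> card) \<Rightarrow> nat \<Rightarrow> bool" where
  "room_cards_perm P pl r \<longleftrightarrow>
     mset (map pl (rooms P ! r)) = mset (map (Cell r) [1..<length (rooms P ! r) + 1])"

fun card_number :: "card \<Rightarrow> nat" where
  "card_number (Cell r v) = v"
| "card_number _ = 0"

lemma room_cards_perm_if_not_room_reject:
  assumes "\<not> room_reject P pl r \<pi>" and \<pi>: "is_perm \<pi> (length (rooms P ! r))"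
  shows "room_cards_perm P pl r"
proof -
  let ?cs = "rooms P ! r"
  let ?cols = "map (\<lambda>j. [pl (?cs ! j), Hc (j + 1)]) [0..<length ?cs]"
  have "map (\<lambda>col. col ! 0) (permute_cols \<pi> ?cols) = map (\<lambda>j. pl (?cs ! j)) \<pi>"
    unfolding permute_cols_def map_map
  proof (rule map_cong[OF refl])
    fix j assume "j \<in> set \<pi>"
    then have "j < length ?cs" using \<pi> unfolding is_perm_def by auto
    then show "((\<lambda>col. col ! 0) \<circ> (!) ?cols) j = pl (?cs ! j)" by simp
  qed
  then have "mset (map (\<lambda>col. col ! 0) (permute_cols \<pi> ?cols))
           = image_mset (\<lambda>j. pl (?cs ! j)) (mset [0..<length ?cs])"
    using is_perm_mset[OF \<pi>] by simp
  also have "\<dots> = mset (map pl (map (\<lambda>j. ?cs ! j) [0..<length ?cs]))"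
    by (simp only: mset_map map_map comp_def)
  finally show ?thesis
    using assms(1) unfolding room_reject_def room_cards_perm_def Let_def map_nth by simp
qed

lemma room_cards_perm_distinct:
  assumes "room_cards_perm P pl r"
  shows "distinct (map pl (rooms P ! r))"
proof -
  have "distinct (map (Cell r) [1..<length (rooms P ! r) + 1])"
    by (simp del: upt_Suc add: distinct_map inj_on_def)
  then show ?thesis
    using mset_eq_imp_distinct_iff assms unfolding room_cards_perm_def by blast
qed

lemma room_cards_perm_image:
  assumes "room_cards_perm P pl r"
  shows "pl ` set (rooms P ! r) = Cell r ` {1..length (rooms P ! r)}"
proof -
  have "set (map pl (rooms P ! r)) = set (map (Cell r) [1..<length (rooms P ! r) + 1])"
    using assms unfolding room_cards_perm_def by (rule mset_eq_setD)
  then show ?thesis by (simp del: upt_Suc add: atLeastLessThanSuc_atLeastAtMost)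
qed

lemma room_cards_perm_numbers:
  assumes "room_cards_perm P pl r"
  shows "(\<lambda>c. card_number (pl c)) ` set (rooms P ! r) = {1..length (rooms P ! r)}"
proof -
  have "(\<lambda>c. card_number (pl c)) ` set (rooms P ! r) = card_number ` Cell r ` {1..length (rooms P ! r)}"
    using room_cards_perm_image[OF assms] by (metis image_image)
  then show ?thesis by (simp add: image_image)
qed

lemma white_cell_card:
  assumes wf: "wf_puzzle P" and rooms: "\<And>r. r < length (rooms P) \<Longrightarrow> room_cards_perm P pl r"
    and c: "c \<in> white P"
  shows "pl c = Cell (roomidx P c) (card_number (pl c)) \<and> card_number (pl c) \<in> {1..rsize P c}"
proof -
  have "pl c \<in> pl ` set (rooms P ! roomidx P c)"
    using roomidx_in_rooms(2)[OF wf c] by (rule imageI)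
  then obtain v where "pl c = Cell (roomidx P c) v" "v \<in> {1..rsize P c}"
    using room_cards_perm_image[OF rooms[OF roomidx_in_rooms(1)[OF wf c]]]
    unfolding rsize_def by auto
  then show ?thesis by simp
qed

lemma length_conv: "length (conv P pl c X m S \<pi>) = rsize P c + (length S - (rsize P c - 1))"
  unfolding conv_def Let_def rsize_def by (simp del: upt_Suc)

lemma conv_tail_in_S:
  assumes "rsize P c \<le> j" "j < length (conv P pl c X m S \<pi>)"
  shows "conv P pl c X m S \<pi> ! j \<in> set S"
proof -
  have "conv P pl c X m S \<pi> ! j = drop (rsize P c - 1) S ! (j - rsize P c)"
    using assms(1) unfolding conv_def Let_def rsize_def by (simp del: upt_Suc add: nth_append)
  moreover have "j - rsize P c < length (drop (rsize P c - 1) S)"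
    using assms length_conv[of P pl c] by simp
  ultimately show ?thesis by (metis in_set_dropD nth_mem)
qed

text \<open>Unscrambling by Row 1 moves the Row 3 card of the column holding R_w to position w.\<close>

lemma nth_conv_room:
  assumes room: "room_cards_perm P pl (roomidx P c)" and \<pi>: "is_perm \<pi> (rsize P c)"
    and k: "k < rsize P c" "pl (rooms P ! roomidx P c ! k) = Cell (roomidx P c) w"
  shows "conv P pl c X m S \<pi> ! (w - 1)
       = (if k = pos P c then X 1 else S ! (if k < pos P c then k else k - 1))"
proof -
  define r where "r = roomidx P c"
  define cs where "cs = rooms P ! r"
  define p where "p = length cs"
  define i where "i = pos P c"
  define row3 where "row3 = map (\<lambda>j. if j = i then X 1 else S ! (if j < i then j else j - 1)) [0..<p]"
  define cols where "cols = map (\<lambda>j. [pl (cs ! j), Hc (j + 1), row3 ! j]) [0..<p]"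
  define sc where "sc = permute_cols \<pi> cols"
  define J where "J = (LEAST j. j < p \<and> sc ! j ! 0 = Cell r w)"
  have p: "rsize P c = p" unfolding rsize_def p_def cs_def r_def ..
  have \<pi>': "is_perm \<pi> p" and len_sc: "length sc = p"
    using \<pi> is_perm_length[OF \<pi>] by (simp_all add: p sc_def permute_cols_def)
  have k': "k < p" "pl (cs ! k) = Cell r w" using k unfolding p cs_def r_def by simp_all
  have "Cell r w \<in> Cell r ` {1..p}"
    using room_cards_perm_image[OF room] k' nth_mem unfolding cs_def r_def p_def by (metis imageI)
  then have w: "1 \<le> w" "w \<le> p" by auto
  have "cols ! j ! 0 = Cell r w \<longleftrightarrow> j = k" if "j < p" for j
    using room_cards_perm_distinct[OF room] that k' nth_eq_iff_index_eq[of "map pl cs" j k]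
    by (simp add: cols_def p_def cs_def r_def)
  then have J: "J < p" "\<pi> ! J = k"
    using Least_permute_cols_key[OF \<pi>' k'(1)] unfolding J_def sc_def by simp_all
  have "w - 1 < p" "[1..<p + 1] ! (w - 1) = w" using w by (auto simp del: upt_Suc)
  then have "conv P pl c X m S \<pi> ! (w - 1) = sc ! J ! 2"
    using w len_sc
    unfolding conv_def Let_def J_def sc_def cols_def row3_def i_def p_def cs_def r_def
    by (simp del: upt_Suc add: nth_append)
  also have "\<dots> = row3 ! k"
    using J k' is_perm_length[OF \<pi>'] by (simp add: sc_def nth_permute_cols cols_def)
  finally show ?thesis using k' by (simp add: row3_def i_def)
qed

lemma conv_encodes:
  assumes wf: "wf_puzzle P" and rooms: "\<And>r. r < length (rooms P) \<Longrightarrow> room_cards_perm P pl r"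
    and c: "c \<in> white P" and \<pi>: "is_perm \<pi> (rsize P c)" and X: "inj X"
    and S: "valid_S X m S" and m: "rsize P c \<le> m"
  shows "length (conv P pl c X m S \<pi>) = m \<and> encodes X (card_number (pl c)) (conv P pl c X m S \<pi>)"
proof -
  define r where "r = roomidx P c"
  define cs where "cs = rooms P ! r"
  define p where "p = length cs"
  define i where "i = pos P c"
  define v where "v = card_number (pl c)"
  have p: "rsize P c = p" unfolding rsize_def p_def cs_def r_def ..
  have room: "room_cards_perm P pl r"
    using rooms roomidx_in_rooms(1)[OF wf c] unfolding r_def by blast
  have v: "pl (cs ! i) = Cell r v" "v \<in> {1..p}"
    using white_cell_card[OF wf rooms c] pos_in_room[OF wf c]
    unfolding v_def cs_def r_def i_def p by simp_all
  have i: "i < p" using pos_in_room(1)[OF wf c] unfolding i_def p .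
  have lenS: "length S = m - 1" using valid_S_length[OF S] .
  have len: "length (conv P pl c X m S \<pi>) = m"
    using length_conv[of P pl c] lenS v m p by simp
  have "conv P pl c X m S \<pi> ! j = X 1 \<longleftrightarrow> j = v - 1" if j: "j < m" for j
  proof (cases "j < p")
    case True
    then have "Cell r (j + 1) \<in> pl ` set cs"
      using room_cards_perm_image[OF room] unfolding cs_def p_def by simp
    then obtain k where k: "k < p" "pl (cs ! k) = Cell r (j + 1)"
      unfolding p_def by (metis imageE in_set_conv_nth)
    have "k = i \<longleftrightarrow> j = v - 1"
      using k i v room_cards_perm_distinct[OF room] nth_eq_iff_index_eq[of "map pl cs" k i]
      unfolding p_def cs_def by auto
    moreover have "conv P pl c X m S \<pi> ! j = (if k = i then X 1 else S ! (if k < i then k else k - 1))"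
      using nth_conv_room[OF room[unfolded r_def] \<pi>, of k "j + 1" X m S] k p
      unfolding i_def cs_def r_def by simp
    moreover have "S ! (if k < i then k else k - 1) \<in> set S" if "k \<noteq> i"
      using that k i lenS m p by auto
    ultimately show ?thesis using valid_S_first_notin[OF S X] by auto
  next
    case False
    then show ?thesis
      using conv_tail_in_S[of P c j pl X m S \<pi>] valid_S_first_notin[OF S X] len j v p by auto
  qed
  then show ?thesis unfolding encodes_def len v_def[symmetric] using v m p by simp
qed

lemma accepts_room_cards_perm:
  assumes "valid_tape P t" "accepts P pl t" "r < length (rooms P)"
  shows "room_cards_perm P pl r"
  using assms unfolding valid_tape_def accepts_def
  by (blast intro: room_cards_perm_if_not_room_reject)

lemma neighbor_reject_if_same_number:
  assumes wf: "wf_puzzle P" and rooms: "\<And>r. r < length (rooms P) \<Longrightarrow> room_cards_perm P pl r"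
    and c: "c \<in> white P" and d: "d \<in> white P"
    and same: "card_number (pl c) = card_number (pl d)"
    and S1: "valid_S Ac (max (rsize P c) (rsize P d)) S1"
    and S2: "valid_S Bc (max (rsize P c) (rsize P d)) S2"
    and \<pi>1: "is_perm \<pi>1 (rsize P c)" and \<pi>2: "is_perm \<pi>2 (rsize P d)"
    and \<rho>: "is_perm \<rho> (max (rsize P c) (rsize P d))"
  shows "neighbor_reject P pl c d S1 \<pi>1 S2 \<pi>2 \<rho>"
proof -
  define m where "m = max (rsize P c) (rsize P d)"
  define v where "v = card_number (pl c)"
  define E1 where "E1 = conv P pl c Ac m S1 \<pi>1"
  define E2 where "E2 = conv P pl d Bc m S2 \<pi>2"
  define cols where "cols = map (\<lambda>j. [E1 ! j, E2 ! j]) [0..<m]"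
  have E1: "length E1 = m \<and> encodes Ac v E1"
    unfolding E1_def v_def
    using conv_encodes[OF wf rooms c \<pi>1 _ S1[folded m_def]] by (simp add: inj_def m_def)
  have E2: "length E2 = m \<and> encodes Bc v E2"
    unfolding E2_def v_def same
    using conv_encodes[OF wf rooms d \<pi>2 _ S2[folded m_def]] by (simp add: inj_def m_def)
  have v: "v - 1 < m" using E1 unfolding encodes_def by auto
  have "cols ! j ! 0 = Ac 1 \<longleftrightarrow> j = v - 1" if "j < m" for j
    using E1 that unfolding encodes_def cols_def by simp
  then obtain i where i: "i < m" "\<rho> ! i = v - 1"
    and least: "(LEAST i. i < m \<and> permute_cols \<rho> cols ! i ! 0 = Ac 1) = i"
    using Least_permute_cols_key[OF \<rho>[folded m_def] v] by blast
  have "permute_cols \<rho> cols ! i ! 1 = Bc 1"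
    using i E2 v is_perm_length[OF \<rho>[folded m_def]]
    unfolding encodes_def by (simp add: nth_permute_cols cols_def)
  then show ?thesis
    using least unfolding neighbor_reject_def Let_def cols_def E1_def E2_def m_def by simp
qed

lemma adj_npairs:
  assumes "c \<in> white P" "d \<in> white P" "adj c d" "roomidx P c \<noteq> roomidx P d"
  shows "(c, d) \<in> npairs P \<or> (d, c) \<in> npairs P"
  using assms unfolding adj_def npairs_def by auto

lemma accepts_neighbor_numbers_differ:
  assumes wf: "wf_puzzle P" and t: "valid_tape P t" and acc: "accepts P pl t"
    and cd: "(c, d) \<in> npairs P"
  shows "card_number (pl c) \<noteq> card_number (pl d)"
proof
  assume same: "card_number (pl c) = card_number (pl d)"
  have "c \<in> white P" "d \<in> white P" using cd unfolding npairs_def by simp_all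
  moreover have "valid_S Ac (max (rsize P c) (rsize P d)) (t_nS t (c, d) 0)
      \<and> valid_S Bc (max (rsize P c) (rsize P d)) (t_nS t (c, d) 1)
      \<and> is_perm (t_npi t (c, d) 0) (rsize P c) \<and> is_perm (t_npi t (c, d) 1) (rsize P d)
      \<and> is_perm (t_nrho t (c, d)) (max (rsize P c) (rsize P d))"
    using t cd unfolding valid_tape_def Let_def by fast
  ultimately have "neighbor_reject P pl c d (t_nS t (c, d) 0) (t_npi t (c, d) 0)
      (t_nS t (c, d) 1) (t_npi t (c, d) 1) (t_nrho t (c, d))"
    using neighbor_reject_if_same_number[OF wf accepts_room_cards_perm[OF t acc]] same by blast
  then show False using acc cd unfolding accepts_def by blast
qed

lemma adj_in_nbrs: "adj b c \<Longrightarrow> c \<in> set (nbrs b)"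
  by (cases b; cases c) (auto simp: adj_def nbrs_def)

lemma length_nbrs: "length (nbrs b) \<le> 4"
  by (cases b) (auto simp: nbrs_def)

lemma arr_white_adj: "wf_puzzle P \<Longrightarrow> b \<in> black P \<Longrightarrow> arr P b \<in> white P \<and> adj b (arr P b)"
  unfolding wf_puzzle_def by blast

lemma acells_white: "wf_puzzle P \<Longrightarrow> b \<in> black P \<Longrightarrow> set (acells P b) \<subseteq> white P"
  using arr_white_adj unfolding acells_def others_def by auto

lemma length_acells:
  assumes "wf_puzzle P" "b \<in> black P"
  shows "length (acells P b) \<le> 4"
proof -
  have "length (others P b) < length (nbrs b)"
    unfolding others_def using adj_in_nbrs[of b "arr P b"] arr_white_adj[OF assms]
    by (intro length_filter_less) auto
  then show ?thesis using length_nbrs[of b] unfolding acells_def by simp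
qed

lemma rival_in_acells:
  assumes "c \<in> white P" "adj b c" "c \<noteq> arr P b"
  obtains k where "0 < k" "k < length (acells P b)" "acells P b ! k = c"
proof -
  have "c \<in> set (others P b)" using assms adj_in_nbrs unfolding others_def by simp
  then obtain j where "j < length (others P b)" "others P b ! j = c"
    by (auto simp: in_set_conv_nth)
  then show ?thesis using that[of "Suc j"] unfolding acells_def by simp
qed

lemma rsize_le_am: "k < length (acells P b) \<Longrightarrow> rsize P (acells P b ! k) \<le> am P b"
  unfolding am_def by (intro Max_ge) auto

lemma shifted_scan_finds_rival:
  fixes E :: "card list list" and s :: nat
  assumes len: "len = 2 * m - 1"
    and row0: "length (E ! 0) = len" "encodes Ac v0 (E ! 0)"
    and rowk: "length (E ! k) = len" "encodes (xset k) v (E ! k)"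
    and k: "0 < k" "k < length E" "k < 4" and le: "v0 \<le> v" "v \<le> m"
  defines "sc \<equiv> shift_cols s (map (\<lambda>j. map (\<lambda>e. e ! j) E) [0..<len])"
  shows "\<exists>l<m. \<exists>card\<in>set (tl (sc ! (((LEAST i. i < len \<and> sc ! i ! 0 = Ac 1) + l) mod len))).
           card \<in> {Bc 1, Cc 1, Dc 1}"
proof -
  define cols where "cols = map (\<lambda>j. map (\<lambda>e. e ! j) E) [0..<len]"
  define i0 where "i0 = (LEAST i. i < len \<and> sc ! i ! 0 = Ac 1)"
  have v0: "1 \<le> v0" "v0 \<le> len" and v: "1 \<le> v" "v \<le> len"
    using row0 rowk unfolding encodes_def by auto
  have sc: "sc = permute_cols (rotate s [0..<len]) cols"
    unfolding sc_def cols_def shift_cols_eq_permute_cols by simp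
  have "0 < length E" using k by linarith
  then have "cols ! j ! 0 = E ! 0 ! j" if "j < len" for j
    using that by (simp add: cols_def nth_map)
  then have "cols ! j ! 0 = Ac 1 \<longleftrightarrow> j = v0 - 1" if "j < len" for j
    using that row0 unfolding encodes_def by simp
  then have "i0 < len" "rotate s [0..<len] ! i0 = v0 - 1"
    using Least_permute_cols_key[OF is_perm_rotate, of "v0 - 1" len] v0
    unfolding i0_def sc by simp_all
  then have start: "(s + i0) mod len = v0 - 1" by (simp add: nth_rotate)
  define l where "l = v - v0"
  have "(s + (i0 + l) mod len) mod len = ((s + i0) mod len + l) mod len"
    by (simp add: mod_add_right_eq mod_add_left_eq add.assoc)
  also have "\<dots> = v - 1" using start v0 v le unfolding l_def by simp
  finally have "sc ! ((i0 + l) mod len) = cols ! (v - 1)"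
    using v0 unfolding sc_def cols_def shift_cols_def by (simp add: nth_rotate)
  then have "tl (sc ! ((i0 + l) mod len)) = map (\<lambda>e. e ! (v - 1)) (tl E)"
    using v unfolding cols_def by (simp add: map_tl)
  moreover have "E ! k ! (v - 1) = xset k 1" using rowk v unfolding encodes_def by simp
  moreover have "E ! k \<in> set (tl E)"
  proof -
    have "k - 1 < length (tl E)" "tl E ! (k - 1) = E ! k" using k by (simp_all add: nth_tl)
    then show ?thesis by (metis nth_mem)
  qed
  moreover have "xset k 1 \<in> {Bc 1, Cc 1, Dc 1}"
    using k by (auto simp: xset_def less_Suc_eq numeral_eq_Suc)
  moreover have "l < m" using v0 le unfolding l_def by simp
  ultimately show ?thesis unfolding i0_def by force
qed

lemma arrow_reject_if_rival:
  assumes wf: "wf_puzzle P" and rooms: "\<And>r. r < length (rooms P) \<Longrightarrow> room_cards_perm P pl r"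
    and b: "b \<in> black P" and c: "c \<in> white P" "adj b c" "c \<noteq> arr P b"
    and le: "card_number (pl (arr P b)) \<le> card_number (pl c)"
    and tape: "\<And>k. k < length (acells P b) \<Longrightarrow>
        valid_S (xset k) (2 * am P b - 1) (S k) \<and> is_perm (\<pi> k) (rsize P (acells P b ! k))"
  shows "arrow_reject P pl b S \<pi> s"
proof -
  define cs where "cs = acells P b"
  define len where "len = 2 * am P b - 1"
  define E where "E = map (\<lambda>k. conv P pl (cs ! k) (xset k) len (S k) (\<pi> k)) [0..<length cs]"
  have row: "length (E ! j) = len \<and> encodes (xset j) (card_number (pl (cs ! j))) (E ! j)"
    if j: "j < length cs" for j
  proof -
    have w: "cs ! j \<in> white P" using acells_white[OF wf b] j nth_mem unfolding cs_def by blast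
    have "rsize P (cs ! j) \<le> len" using rsize_le_am[of j P b] j unfolding cs_def len_def by simp
    then show ?thesis
      using conv_encodes[OF wf rooms w _ xset_inj] tape[of j] j length_acells[OF wf b]
      unfolding E_def cs_def len_def by simp
  qed
  obtain k where k: "0 < k" "k < length cs" "cs ! k = c"
    using rival_in_acells[OF c] unfolding cs_def by blast
  have "card_number (pl c) \<le> am P b"
    using white_cell_card[OF wf rooms c(1)] rsize_le_am[of k P b] k unfolding cs_def by auto
  then show ?thesis
    using shifted_scan_finds_rival[OF len_def, of E "card_number (pl (arr P b))" k
        "card_number (pl c)" s] row[of 0] row[of k] k le length_acells[OF wf b]
    unfolding arrow_reject_def Let_def E_def cs_def len_def
    by (simp add: acells_def xset_def)
qed

lemma accepts_arrow_target_greatest: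
  assumes wf: "wf_puzzle P" and t: "valid_tape P t" and acc: "accepts P pl t"
    and b: "b \<in> black P" and c: "c \<in> white P" "adj b c" "c \<noteq> arr P b"
  shows "card_number (pl c) < card_number (pl (arr P b))"
proof (rule ccontr)
  assume "\<not> ?thesis"
  then have "arrow_reject P pl b (t_aS t b) (t_api t b) (t_ashift t b)"
    using t b unfolding valid_tape_def
    by (intro arrow_reject_if_rival[OF wf accepts_room_cards_perm[OF t acc] b c]) auto
  then show False using acc b unfolding accepts_def by blast
qed

theorem lemma2:
  fixes P :: puzzle and pl :: "cell \<Rightarrow> card" and t :: tape
  assumes "wf_puzzle P"
    and "placement_ok P pl"
    and "\<not> (\<exists>x. is_solution P x \<and> (\<forall>c \<in> white P. pl c = Cell (roomidx P c) (x c)))"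
    and "valid_tape P t"
  shows "\<not> accepts P pl t"
proof
  assume acc: "accepts P pl t"
  note wf = assms(1) and rooms = accepts_room_cards_perm[OF assms(4) acc]
  have "is_solution P (\<lambda>c. card_number (pl c))"
    unfolding is_solution_def
  proof (intro conjI allI ballI impI)
    fix c v assume "pre P c = Some v"
    then show "card_number (pl c) = v"
      using assms(2) unfolding placement_ok_def by (metis card_number.simps(1))
  next
    fix r assume "r < length (rooms P)"
    then show "(\<lambda>c. card_number (pl c)) ` set (rooms P ! r) = {1..length (rooms P ! r)}"
      by (rule room_cards_perm_numbers[OF rooms])
  next
    fix c d assume "c \<in> white P" "d \<in> white P" "adj c d \<and> roomidx P c \<noteq> roomidx P d"
    then show "card_number (pl c) \<noteq> card_number (pl d)"
      using adj_npairs accepts_neighbor_numbers_differ[OF wf assms(4) acc] by metis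
  next
    fix b c assume "b \<in> black P" "c \<in> white P" "adj b c \<and> c \<noteq> arr P b"
    then show "card_number (pl c) < card_number (pl (arr P b))"
      using accepts_arrow_target_greatest[OF wf assms(4) acc] by blast
  qed
  moreover have "\<forall>c \<in> white P. pl c = Cell (roomidx P c) (card_number (pl c))"
    using white_cell_card[OF wf rooms] by blast
  ultimately show False using assms(3) by blast
qed

end
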